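(* Let $M\in S_2^+$, let $e_1,\dots,e_n\in\mathbb Z^2$ with $n>2$, and let $\varepsilon\in\{-1,1\}$. Assume that for all $1\le i\le n$, with $e_{n+1}:=e_1$, $$\det(e_i,e_{i+1})=\varepsilon,\qquad \langle e_i,Me_{i+1}\rangle>-\tfrac12\min\{\|e_i\|_M^2,\|e_{i+1}\|_M^2\}.$$ Then every $M$-reduced basis $(e,f)$ of $\mathbb Z^2$ satisfies $\{e,f\}\subset\{e_1,\dots,e_n\}$.
   Context: $\|e\|_M:=\sqrt{\langle e,Me\rangle}$. A basis of $\mathbb Z^2$ is a pair in $\mathbb Z^2$ with determinant $\pm1$. An $M$-reduced basis is a basis $(e_1,e_2)$ with $\|e_1\|_M=\min\{\|e\|_M:e\in\mathbb Z^2\setminus\{0\}\}$ and $\|e_2\|_M=\min\{\|e\|_M:e\in\mathbb Z^2\setminus e_1\mathbb Z\}$. *)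

theory Defs
  imports "HOL-Analysis.Analysis"
begin

definition pos_def_sym :: "real^2^2 \<Rightarrow> bool" where
  "pos_def_sym M \<longleftrightarrow> transpose M = M \<and> (\<forall>x::real^2. x \<noteq> 0 \<longrightarrow> x \<bullet> (M *v x) > 0)"

definition rv :: "int^2 \<Rightarrow> real^2" where
  "rv e = (\<chi> i. real_of_int (e $ i))"

definition bform :: "real^2^2 \<Rightarrow> int^2 \<Rightarrow> int^2 \<Rightarrow> real" where
  "bform M e f = rv e \<bullet> (M *v rv f)"

definition mnorm :: "real^2^2 \<Rightarrow> int^2 \<Rightarrow> real" where
  "mnorm M e = sqrt (bform M e e)"

definition det2 :: "int^2 \<Rightarrow> int^2 \<Rightarrow> int" where
  "det2 e f = e $ 1 * f $ 2 - e $ 2 * f $ 1"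

definition is_basis :: "int^2 \<Rightarrow> int^2 \<Rightarrow> bool" where
  "is_basis e f \<longleftrightarrow> det2 e f = 1 \<or> det2 e f = -1"

definition reduced_basis :: "real^2^2 \<Rightarrow> int^2 \<Rightarrow> int^2 \<Rightarrow> bool" where
  "reduced_basis M e1 e2 \<longleftrightarrow> is_basis e1 e2 \<and>
     mnorm M e1 = Inf (mnorm M ` (UNIV - {0})) \<and>
     mnorm M e2 = Inf (mnorm M ` (UNIV - range (\<lambda>k::int. k *s e1)))"

end

theory Submission
  imports Defs
begin

text \<open>
  Consecutive vectors of the cycle have determinant \<open>\<epsilon>\<close>, so by the Pluecker relation the cycle
  winds once around the origin, and every primitive vector \<open>v\<close> lies in a cone spanned by two
  consecutive members: \<open>v = a e(i) + b e(i+1)\<close> with integers \<open>a, b \<ge> 0\<close>. If both coefficients are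
  positive, the lower bound on \<open>\<langle>e(i), M e(i+1)\<rangle>\<close> makes \<open>v\<close> strictly longer than both
  \<open>e(i)\<close> and \<open>e(i+1)\<close>. The first vector of a reduced basis is no longer than any nonzero vector,
  and the second no longer than any vector off the line of the first, which cannot contain two
  consecutive members. Hence one coefficient vanishes and primitivity forces the other to be 1.
\<close>

definition cyc_succ :: "nat \<Rightarrow> nat \<Rightarrow> nat" where
  "cyc_succ n i = (if i = n then 1 else i + 1)"

lemma cyc_succ_in_range: "1 \<le> i \<Longrightarrow> i \<le> n \<Longrightarrow> cyc_succ n i \<in> {1..n}"
  unfolding cyc_succ_def by auto

lemma cyclic_induct:
  assumes "P i0" "i0 \<in> {1..n}"
    and step: "\<And>i. i \<in> {1..n} \<Longrightarrow> P i \<Longrightarrow> P (cyc_succ n i)"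
    and "j \<in> {1..n}"
  shows "P j"
proof -
  have up: "P j" if "P i" "1 \<le> i" "i \<le> j" "j \<le> n" for i j
    using that(3,4)
  proof (induction j rule: dec_induct)
    case base
    then show ?case using that by simp
  next
    case (step k)
    then show ?case using assms(3)[of k] that by (auto simp: cyc_succ_def)
  qed
  have "P 1"
    using up[OF assms(1), of n] assms(2) step[of n] by (auto simp: cyc_succ_def)
  then show ?thesis using up[of 1 j] assms(4) by simp
qed

lemma det2_swap: "det2 x y = - det2 y x"
  unfolding det2_def by simp

lemma det2_smult_left: "det2 (b *s y) u = b * det2 y u"
  unfolding det2_def by (simp add: algebra_simps)

lemma det2_smult_right: "det2 u (b *s y) = b * det2 u y"
  unfolding det2_def by (simp add: algebra_simps)

lemma det2_zero_left [simp]: "det2 0 u = 0"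
  and det2_zero_right [simp]: "det2 u 0 = 0"
  unfolding det2_def by simp_all

lemma det2_plucker: "det2 x z * det2 y w = det2 x y * det2 z w + det2 x w * det2 y z"
  unfolding det2_def by (simp add: algebra_simps)

lemma det2_cramer:
  assumes "det2 x y = \<epsilon>" "\<epsilon> * \<epsilon> = 1"
  shows "v = (- \<epsilon> * det2 y v) *s x + (\<epsilon> * det2 x v) *s y"
proof -
  have "v $ i = ((- \<epsilon> * det2 y v) *s x + (\<epsilon> * det2 x v) *s y) $ i" if "i = 1 \<or> i = 2" for i
  proof -
    have "v $ i = \<epsilon> * (det2 x y * v $ i)" using assms by (simp add: mult.assoc[symmetric])
    also have "det2 x y * v $ i = det2 v y * x $ i + det2 x v * y $ i"
      using that unfolding det2_def by (auto simp: algebra_simps)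
    finally show ?thesis unfolding det2_def by (simp add: algebra_simps)
  qed
  then show ?thesis unfolding vec_eq_iff forall_2 by auto
qed

text \<open>
  Expanding \<open>det(e(1), e(k+1))\<close> by Pluecker shows inductively that \<open>\<epsilon> det(e(1), e(k)) > 0\<close> for
  \<open>k \<ge> 2\<close>, which fails for \<open>k = n\<close> since \<open>\<epsilon> det(e(n), e(1)) > 0\<close>.
\<close>
lemma oriented_cycle_no_common_side:
  fixes es :: "nat \<Rightarrow> int^2"
  assumes "n \<ge> 2"
    and oriented: "\<And>i. i \<in> {1..n} \<Longrightarrow> 0 < \<epsilon> * det2 (es i) (es (cyc_succ n i))"
    and side: "\<And>i. i \<in> {1..n} \<Longrightarrow> 0 < \<delta> * det2 (es i) v"
  shows False
proof -
  have "0 < \<epsilon> * det2 (es 1) (es k)" if "2 \<le> k" "k \<le> n" for k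
    using that
  proof (induction k rule: dec_induct)
    case base
    then show ?case using oriented[of 1] by (simp add: cyc_succ_def numeral_2_eq_2)
  next
    case (step k)
    have side_k: "0 < \<delta> * det2 (es j) v" if "j \<in> {1, k, Suc k}" for j
      using side that step by auto
    have "0 < \<epsilon> * det2 (es k) (es (Suc k))"
      using oriented[of k] step by (simp add: cyc_succ_def)
    moreover have "0 < \<epsilon> * det2 (es 1) (es k)" using step by simp
    ultimately have "0 < \<epsilon> * det2 (es 1) (es k) * (\<delta> * det2 (es (Suc k)) v)
        + \<delta> * det2 (es 1) v * (\<epsilon> * det2 (es k) (es (Suc k)))"
      using side_k[of 1] side_k[of "Suc k"] by (simp add: add_pos_pos)
    also have "\<dots> = \<epsilon> * det2 (es 1) (es (Suc k)) * (\<delta> * det2 (es k) v)"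
      using det2_plucker[of "es 1" "es (Suc k)" "es k" v] by (simp add: algebra_simps)
    finally show ?case using side_k[of k] zero_less_mult_pos2 by blast
  qed
  then have "0 < \<epsilon> * det2 (es 1) (es n)" using assms(1) by simp
  moreover have "0 < \<epsilon> * det2 (es n) (es 1)" using oriented[of n] assms(1) by (simp add: cyc_succ_def)
  ultimately show False using det2_swap[of "es 1" "es n"] by simp
qed

lemma oriented_cycle_cone:
  fixes es :: "nat \<Rightarrow> int^2"
  assumes "n \<ge> 2"
    and oriented: "\<And>i. i \<in> {1..n} \<Longrightarrow> 0 < \<epsilon> * det2 (es i) (es (cyc_succ n i))"
  shows "\<exists>i\<in>{1..n}. 0 \<le> \<epsilon> * det2 (es i) v \<and> \<epsilon> * det2 (es (cyc_succ n i)) v \<le> 0"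
proof (rule ccontr)
  assume "\<not> ?thesis"
  then have turn: "0 < \<epsilon> * det2 (es (cyc_succ n i)) v"
    if "i \<in> {1..n}" "0 \<le> \<epsilon> * det2 (es i) v" for i
    using that by force
  show False
  proof (cases "\<exists>i0\<in>{1..n}. 0 \<le> \<epsilon> * det2 (es i0) v")
    case True
    then obtain i0 where i0: "i0 \<in> {1..n}" "0 \<le> \<epsilon> * det2 (es i0) v" by blast
    have "0 < \<epsilon> * det2 (es j) v" if "j \<in> {1..n}" for j
    proof (rule cyclic_induct[where P = "\<lambda>j. 0 < \<epsilon> * det2 (es j) v"])
      show "0 < \<epsilon> * det2 (es (cyc_succ n i0)) v" "cyc_succ n i0 \<in> {1..n}"
        using turn[OF i0] i0(1) cyc_succ_in_range[of i0 n] by auto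
    qed (use turn that in auto)
    then show False using oriented_cycle_no_common_side[of n \<epsilon> es] assms by blast
  next
    case False
    have "0 < - \<epsilon> * det2 (es j) v" if "j \<in> {1..n}" for j
      using False that by force
    then show False using oriented_cycle_no_common_side[of n \<epsilon> es] assms by blast
  qed
qed

lemma unimodular_cycle_cone_decomp:
  fixes es :: "nat \<Rightarrow> int^2"
  assumes "n \<ge> 2" "\<epsilon> * \<epsilon> = 1"
    and det: "\<And>i. i \<in> {1..n} \<Longrightarrow> det2 (es i) (es (cyc_succ n i)) = \<epsilon>"
  obtains i a b where "i \<in> {1..n}" "a \<ge> 0" "b \<ge> 0" "v = a *s es i + b *s es (cyc_succ n i)"
proof -
  have "0 < \<epsilon> * det2 (es i) (es (cyc_succ n i))" if "i \<in> {1..n}" for i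
    using det[OF that] assms(2) by simp
  then obtain i where
    i: "i \<in> {1..n}" "0 \<le> \<epsilon> * det2 (es i) v" "\<epsilon> * det2 (es (cyc_succ n i)) v \<le> 0"
    using oriented_cycle_cone[OF assms(1)] by blast
  show thesis
    using that[OF i(1) _ _ det2_cramer[OF det[OF i(1)] assms(2)]] i(2,3) by simp
qed

lemma bform_components:
  "bform M x y =
     of_int (x$1) * (M$1$1 * of_int (y$1) + M$1$2 * of_int (y$2)) +
     of_int (x$2) * (M$2$1 * of_int (y$1) + M$2$2 * of_int (y$2))"
  unfolding bform_def rv_def inner_vec_def matrix_vector_mult_def
  by (simp add: sum_2)

lemma pos_def_sym_symmetric:
  assumes "pos_def_sym M"
  shows "M$1$2 = M$2$1"
proof -
  have "transpose M $ 1 $ 2 = M $ 1 $ 2" using assms unfolding pos_def_sym_def by simp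
  then show ?thesis by (simp add: transpose_def)
qed

lemma rv_eq_0_iff [simp]: "rv x = 0 \<longleftrightarrow> x = 0"
  unfolding rv_def by (simp add: vec_eq_iff)

lemma rv_zero [simp]: "rv 0 = 0"
  by simp

lemma bform_pos: "pos_def_sym M \<Longrightarrow> x \<noteq> 0 \<Longrightarrow> 0 < bform M x x"
  unfolding pos_def_sym_def bform_def by simp

lemma bform_nonneg: "pos_def_sym M \<Longrightarrow> 0 \<le> bform M x x"
  using bform_pos[of M x] by (cases "x = 0") (auto simp: bform_def)

lemma mnorm_sq: "pos_def_sym M \<Longrightarrow> (mnorm M x)\<^sup>2 = bform M x x"
  unfolding mnorm_def using bform_nonneg by simp

lemma bform_lincomb:
  assumes "pos_def_sym M"
  shows "bform M (a *s x + b *s y) (a *s x + b *s y) =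
    of_int a ^ 2 * bform M x x + 2 * of_int a * of_int b * bform M x y + of_int b ^ 2 * bform M y y"
  using pos_def_sym_symmetric[OF assms] unfolding bform_components
  by (simp add: algebra_simps power2_eq_square)

text \<open>
  With \<open>m = min p q\<close>: \<open>a\<^sup>2 p + b\<^sup>2 q - a b m = m (a\<^sup>2 - a b + b\<^sup>2) + a\<^sup>2 (p - m) + b\<^sup>2 (q - m)
  \<ge> m + (p - m) + (q - m) = max p q\<close>.
\<close>
lemma lincomb_gt_max:
  fixes p q B a b :: real
  assumes "0 < p" "0 < q" "- (1/2) * min p q < B" "1 \<le> a" "1 \<le> b"
  shows "max p q < a\<^sup>2 * p + 2 * a * b * B + b\<^sup>2 * q"
proof -
  define m where "m = min p q"
  have ab: "1 \<le> a * b" using assms(4,5) mult_mono[of 1 a 1 b] by simp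
  have m: "0 < m" "m \<le> p" "m \<le> q" "max p q = m + (p - m) + (q - m)"
    using assms(1,2) unfolding m_def by auto
  have "m \<le> m * (a\<^sup>2 - a * b + b\<^sup>2)"
  proof -
    have "1 \<le> a\<^sup>2 - a * b + b\<^sup>2"
      using ab zero_le_power2[of "a - b"] by (simp add: power2_diff)
    then show ?thesis using m(1) by simp
  qed
  moreover have "p - m \<le> a\<^sup>2 * (p - m)" "q - m \<le> b\<^sup>2 * (q - m)"
    using m assms(4,5) by (simp_all add: one_le_power mult_le_cancel_right1)
  moreover have "- (a * b) * m < 2 * a * b * B"
    using mult_strict_left_mono[OF assms(3), of "2 * a * b"] ab unfolding m_def by simp
  ultimately show ?thesis
    unfolding m(4) by (simp add: algebra_simps power2_eq_square)
qed

lemma primitive_in_cycle: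
  fixes M :: "real^2^2" and es :: "nat \<Rightarrow> int^2"
  assumes pd: "pos_def_sym M" and "n \<ge> 2" and "\<epsilon> * \<epsilon> = 1"
    and det: "\<And>i. i \<in> {1..n} \<Longrightarrow> det2 (es i) (es (cyc_succ n i)) = \<epsilon>"
    and obtuse: "\<And>i. i \<in> {1..n} \<Longrightarrow>
      - (1/2) * min (bform M (es i) (es i)) (bform M (es (cyc_succ n i)) (es (cyc_succ n i)))
        < bform M (es i) (es (cyc_succ n i))"
    and primitive: "\<bar>det2 u v\<bar> = 1"
    and short: "\<And>i. i \<in> {1..n} \<Longrightarrow>
      bform M v v \<le> bform M (es i) (es i) \<or> bform M v v \<le> bform M (es (cyc_succ n i)) (es (cyc_succ n i))"
  shows "v \<in> es ` {1..n}"
proof -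
  obtain i a b where i: "i \<in> {1..n}" and ab: "a \<ge> 0" "b \<ge> 0"
    and v: "v = a *s es i + b *s es (cyc_succ n i)"
    using unimodular_cycle_cone_decomp[of n \<epsilon> es v] assms(2,3) det by blast
  define x y where "x = es i" and "y = es (cyc_succ n i)"
  have nonzero: "x \<noteq> 0" "y \<noteq> 0"
    using det[OF i] assms(3) unfolding x_def y_def by auto
  have unit: "c = 1" if "c \<ge> 0" "\<bar>c * d\<bar> = 1" for c d :: int
    using that by (simp add: abs_mult zmult_eq_1_iff)
  consider "a = 0" | "b = 0" | "a \<ge> 1" "b \<ge> 1" using ab by linarith
  then show ?thesis
  proof cases
    case 1
    then have "b = 1" using primitive unit[of b] ab v by (simp add: det2_smult_right)
    then show ?thesis using 1 v i cyc_succ_in_range by auto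
  next
    case 2
    then have "a = 1" using primitive unit[of a] ab v by (simp add: det2_smult_right)
    then show ?thesis using 2 v i by auto
  next
    case 3
    have "max (bform M x x) (bform M y y) < bform M v v"
      unfolding v bform_lincomb[OF pd] x_def[symmetric] y_def[symmetric]
      using 3 obtuse[OF i] bform_pos[OF pd] nonzero
      by (intro lincomb_gt_max) (auto simp: x_def y_def)
    then show ?thesis using short[OF i] unfolding x_def y_def by auto
  qed
qed

lemma mnorm_Inf_le:
  assumes "pos_def_sym M" "mnorm M e = Inf (mnorm M ` S)" "x \<in> S"
  shows "bform M e e \<le> bform M x x"
proof -
  have "mnorm M e \<le> mnorm M x"
    unfolding assms(2) using assms(3)
    by (intro cInf_lower bdd_belowI[of _ 0]) (auto simp: mnorm_def bform_nonneg[OF assms(1)])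
  then show ?thesis unfolding mnorm_def by simp
qed

lemma reduced_basis_first_le:
  "pos_def_sym M \<Longrightarrow> reduced_basis M e f \<Longrightarrow> x \<noteq> 0 \<Longrightarrow> bform M e e \<le> bform M x x"
  unfolding reduced_basis_def by (blast intro: mnorm_Inf_le)

lemma reduced_basis_second_le:
  "pos_def_sym M \<Longrightarrow> reduced_basis M e f \<Longrightarrow> x \<notin> range (\<lambda>k. k *s e) \<Longrightarrow>
    bform M f f \<le> bform M x x"
  unfolding reduced_basis_def by (blast intro: mnorm_Inf_le)

lemma unimodular_pair_not_collinear:
  assumes "\<bar>det2 x y\<bar> = 1"
  shows "x \<notin> range (\<lambda>k. k *s e) \<or> y \<notin> range (\<lambda>k. k *s e)"
  using assms by (auto simp: det2_smult_left det2_smult_right det2_def)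

theorem mainTheorem11:
  fixes M :: "real^2^2" and es :: "nat \<Rightarrow> int^2" and n :: nat and \<epsilon> :: int
  assumes "pos_def_sym M"
    and "n > 2"
    and "\<epsilon> = 1 \<or> \<epsilon> = -1"
    and "\<And>i. 1 \<le> i \<Longrightarrow> i \<le> n \<Longrightarrow>
           det2 (es i) (es (if i = n then 1 else i + 1)) = \<epsilon>"
    and "\<And>i. 1 \<le> i \<Longrightarrow> i \<le> n \<Longrightarrow>
           bform M (es i) (es (if i = n then 1 else i + 1)) >
             - (1/2) * min ((mnorm M (es i))\<^sup>2) ((mnorm M (es (if i = n then 1 else i + 1)))\<^sup>2)"
  shows "\<forall>e f. reduced_basis M e f \<longrightarrow> {e, f} \<subseteq> es ` {1..n}"
proof (intro allI impI)
  fix e f assume red: "reduced_basis M e f"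
  have eps: "\<epsilon> * \<epsilon> = 1" using assms(3) by auto
  have det: "\<And>i. i \<in> {1..n} \<Longrightarrow> det2 (es i) (es (cyc_succ n i)) = \<epsilon>"
    using assms(4) by (simp add: cyc_succ_def)
  have obtuse: "\<And>i. i \<in> {1..n} \<Longrightarrow>
      - (1/2) * min (bform M (es i) (es i)) (bform M (es (cyc_succ n i)) (es (cyc_succ n i)))
        < bform M (es i) (es (cyc_succ n i))"
    using assms(5) by (simp add: cyc_succ_def mnorm_sq[OF assms(1)])
  have n2: "n \<ge> 2" using assms(2) by simp
  have basis: "\<bar>det2 e f\<bar> = 1" "\<bar>det2 f e\<bar> = 1"
    using red det2_swap[of e f] unfolding reduced_basis_def is_basis_def by auto
  have "e \<in> es ` {1..n}"
  proof (rule primitive_in_cycle[of M n \<epsilon> es f e])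
    fix i assume "i \<in> {1..n}"
    then have "es i \<noteq> 0" using det[of i] eps by auto
    then show "bform M e e \<le> bform M (es i) (es i) \<or>
        bform M e e \<le> bform M (es (cyc_succ n i)) (es (cyc_succ n i))"
      using reduced_basis_first_le[OF assms(1) red] by blast
  qed (fact assms(1) n2 eps det obtuse basis)+
  moreover have "f \<in> es ` {1..n}"
  proof (rule primitive_in_cycle[of M n \<epsilon> es e f])
    fix i assume "i \<in> {1..n}"
    then have "\<bar>det2 (es i) (es (cyc_succ n i))\<bar> = 1" using det[of i] assms(3) by auto
    then show "bform M f f \<le> bform M (es i) (es i) \<or>
        bform M f f \<le> bform M (es (cyc_succ n i)) (es (cyc_succ n i))"
      using reduced_basis_second_le[OF assms(1) red] unimodular_pair_not_collinear by blast
  qed (fact assms(1) n2 eps det obtuse basis)+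
  ultimately show "{e, f} \<subseteq> es ` {1..n}" by simp
qed

end
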